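(* Let $X$ be a (real or complex) Banach space, $S$ a Hausdorff topological space, and $J\colon X\to C^{b}(S)$ a nice embedding (see context). For $s\in S$ let $p_s=J^{*}(\delta_s)\in X^{*}$, let $\Pi_s$ be the $L$-projection of $X^*$ onto $\operatorname{lin}\{p_s\}$, and let $\pi_s\in X^{**}$ be the functional with $\Pi_s(x^* )=\pi_s(x^* )\,p_s$ for all $x^*\in X^*$. Let $T\in L(X)$, put $q_s=T^{*}(p_s)$ for $s\in S$, and for $\varepsilon>0$ let $U_\varepsilon=\{s\in S:\ \|q_s\|>\|T\|-\varepsilon\}$ (an open subset of $S$). Then $T$ satisfies the Daugavet equation $\|\mathrm{Id}+T\|=1+\|T\|$ if and only if $$\sup_{s\in U_\varepsilon}\bigl(|1+\pi_s(q_s)|-(1+|\pi_s(q_s)|)\bigr)\ge 0\qquad\text{for all }\varepsilon>0.$$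
   Context: $C^{b}(S)$ denotes the sup-normed Banach space of bounded continuous scalar-valued functions on $S$, and $\delta_s$ the functional $f\mapsto f(s)$ on it. A closed subspace $F$ of a Banach space $E$ is an $L$-summand if there is a projection $\Pi$ of $E$ onto $F$ (an $L$-projection) with $\|\xi\|=\|\Pi\xi\|+\|\xi-\Pi\xi\|$ for all $\xi\in E$. A linear map $J\colon X\to C^b(S)$ is a nice embedding if $J$ is an isometry and for every $s\in S$: (N1) $p_s:=J^*(\delta_s)$ satisfies $\|p_s\|=1$; (N2) $\operatorname{lin}\{p_s\}$ is an $L$-summand in $X^*$. $L(X)$ denotes the bounded linear operators on $X$. *)

theory Defs
  imports "HOL-Analysis.Analysis"
begin

text \<open>Scalars: a type 'k of class real_normed_field (up to isomorphism exactly the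
  real or the complex numbers).  The Banach space X is a type 'a of class banach
  (real Banach space structure) together with a scalar multiplication by 'k that
  extends the real one and is norm-multiplicative; for 'k = real this is scaleR.\<close>

definition scalar_structure :: "('k::real_normed_field \<Rightarrow> 'a::real_normed_vector \<Rightarrow> 'a) \<Rightarrow> bool" where
  "scalar_structure sm \<longleftrightarrow>
     (\<forall>a b x. sm (a + b) x = sm a x + sm b x) \<and>
     (\<forall>a x y. sm a (x + y) = sm a x + sm a y) \<and>
     (\<forall>a b x. sm (a * b) x = sm a (sm b x)) \<and>
     (\<forall>r x. sm (of_real r) x = r *\<^sub>R x) \<and>
     (\<forall>a x. norm (sm a x) = norm a * norm x)"

definition klinear_op :: "('k::real_normed_field \<Rightarrow> 'a::real_normed_vector \<Rightarrow> 'a) \<Rightarrow> ('a \<Rightarrow> 'a) \<Rightarrow> bool" where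
  "klinear_op sm T \<longleftrightarrow> (\<forall>x y. T (x + y) = T x + T y) \<and> (\<forall>c x. T (sm c x) = sm c (T x))"

definition bounded_ops :: "('k::real_normed_field \<Rightarrow> 'a::real_normed_vector \<Rightarrow> 'a) \<Rightarrow> ('a \<Rightarrow> 'a) set" where
  "bounded_ops sm = {T. klinear_op sm T \<and> (\<exists>K. \<forall>x. norm (T x) \<le> K * norm x)}"

definition dual :: "('k::real_normed_field \<Rightarrow> 'a::real_normed_vector \<Rightarrow> 'a) \<Rightarrow> ('a \<Rightarrow> 'k) set" where
  "dual sm = {f. (\<forall>x y. f (x + y) = f x + f y) \<and> (\<forall>c x. f (sm c x) = c * f x) \<and>
                  (\<exists>K. \<forall>x. norm (f x) \<le> K * norm x)}"

definition L_projection :: "('k::real_normed_field \<Rightarrow> 'a::real_normed_vector \<Rightarrow> 'a) \<Rightarrow>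
    (('a \<Rightarrow> 'k) \<Rightarrow> ('a \<Rightarrow> 'k)) \<Rightarrow> ('a \<Rightarrow> 'k) set \<Rightarrow> bool" where
  "L_projection sm P F \<longleftrightarrow>
     F \<subseteq> dual sm \<and>
     P ` dual sm = F \<and>
     (\<forall>f\<in>dual sm. \<forall>g\<in>dual sm. P (\<lambda>x. f x + g x) = (\<lambda>x. P f x + P g x)) \<and>
     (\<forall>f\<in>dual sm. \<forall>c. P (\<lambda>x. c * f x) = (\<lambda>x. c * P f x)) \<and>
     (\<forall>f\<in>dual sm. P (P f) = P f) \<and>
     (\<forall>f\<in>dual sm. onorm f = onorm (P f) + onorm (\<lambda>x. f x - P f x))"

definition L_summand :: "('k::real_normed_field \<Rightarrow> 'a::real_normed_vector \<Rightarrow> 'a) \<Rightarrow> ('a \<Rightarrow> 'k) set \<Rightarrow> bool" where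
  "L_summand sm F \<longleftrightarrow> (\<exists>P. L_projection sm P F)"

definition lin1 :: "('a \<Rightarrow> 'k::real_normed_field) \<Rightarrow> ('a \<Rightarrow> 'k) set" where
  "lin1 f = {(\<lambda>x. c * f x) | c. True}"

text \<open>p_s = J*(delta_s)\<close>
definition peval :: "('a \<Rightarrow> ('s::topological_space \<Rightarrow>\<^sub>C 'k::real_normed_field)) \<Rightarrow> 's \<Rightarrow> 'a \<Rightarrow> 'k" where
  "peval J s = (\<lambda>x. apply_bcontfun (J x) s)"

definition nice_embedding :: "('k::real_normed_field \<Rightarrow> 'a::real_normed_vector \<Rightarrow> 'a) \<Rightarrow>
    ('a \<Rightarrow> ('s::topological_space \<Rightarrow>\<^sub>C 'k)) \<Rightarrow> bool" where
  "nice_embedding sm J \<longleftrightarrow>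
     (\<forall>x y. J (x + y) = J x + J y) \<and>
     (\<forall>c x s. apply_bcontfun (J (sm c x)) s = c * apply_bcontfun (J x) s) \<and>
     (\<forall>x. norm (J x) = norm x) \<and>
     (\<forall>s. onorm (peval J s) = 1) \<and>
     (\<forall>s. L_summand sm (lin1 (peval J s)))"

end

theory Submission
  imports Defs
begin

text \<open>For every point s, the L-decomposition of \<open>X\<^sup>*\<close> along \<open>lin {p\<^sub>s}\<close> splits
  \<open>(Id + T)\<^sup>* p\<^sub>s = (1 + \<pi>\<^sub>s(q\<^sub>s)) p\<^sub>s + (q\<^sub>s - \<Pi>\<^sub>s q\<^sub>s)\<close> and \<open>q\<^sub>s = \<pi>\<^sub>s(q\<^sub>s) p\<^sub>s + (q\<^sub>s - \<Pi>\<^sub>s q\<^sub>s)\<close>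
  with additive norms, whence
  \<open>\<parallel>(Id + T)\<^sup>* p\<^sub>s\<parallel> = 1 + \<parallel>q\<^sub>s\<parallel> + (\<bar>1 + \<pi>\<^sub>s(q\<^sub>s)\<bar> - (1 + \<bar>\<pi>\<^sub>s(q\<^sub>s)\<bar>))\<close>, the last summand
  being \<open>\<le> 0\<close>.  Since J is an isometry, the norm of every operator A is
  \<open>sup\<^sub>s \<parallel>A\<^sup>* p\<^sub>s\<parallel>\<close>.  Hence \<open>\<parallel>Id + T\<parallel> = 1 + \<parallel>T\<parallel>\<close> holds exactly when there are points
  where \<open>\<parallel>q\<^sub>s\<parallel>\<close> is almost \<open>\<parallel>T\<parallel>\<close> and the defect is almost 0 simultaneously.\<close>

lemma real_homogeneous_if_scalar_homogeneous:
  assumes "scalar_structure sm"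
    and "\<And>c x. f (sm c x) = c * f x"
  shows "f (r *\<^sub>R x) = r *\<^sub>R f x"
proof -
  have "r *\<^sub>R x = sm (of_real r) x"
    using assms(1) unfolding scalar_structure_def by simp
  then show ?thesis
    using assms(2) by (simp add: scaleR_conv_of_real)
qed

lemma dual_imp_bounded_linear:
  assumes sm: "scalar_structure sm" and f: "f \<in> dual sm"
  shows "bounded_linear f"
proof -
  from f obtain K where "\<And>x. norm (f x) \<le> K * norm x"
    and "\<And>x y. f (x + y) = f x + f y" and "\<And>c x. f (sm c x) = c * f x"
    unfolding dual_def by blast
  with real_homogeneous_if_scalar_homogeneous[OF sm] show ?thesis
    by (intro bounded_linear_intro[where K = K]) (auto simp: mult.commute)
qed

lemma bounded_ops_imp_bounded_linear:
  assumes sm: "scalar_structure sm" and T: "T \<in> bounded_ops sm"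
  shows "bounded_linear T"
proof -
  from T obtain K where "\<And>x. norm (T x) \<le> K * norm x"
    and "\<And>x y. T (x + y) = T x + T y" and "\<And>c x. T (sm c x) = sm c (T x)"
    unfolding bounded_ops_def klinear_op_def by blast
  moreover have "T (r *\<^sub>R x) = r *\<^sub>R T x" for r x
    using sm \<open>\<And>c x. T (sm c x) = sm c (T x)\<close> unfolding scalar_structure_def by metis
  ultimately show ?thesis
    by (intro bounded_linear_intro[where K = K]) (auto simp: mult.commute)
qed

lemma dual_add:
  assumes f: "f \<in> dual sm" and g: "g \<in> dual sm"
  shows "(\<lambda>x. f x + g x) \<in> dual sm"
proof -
  from f obtain K1 where K1: "\<And>x. norm (f x) \<le> K1 * norm x" unfolding dual_def by blast
  from g obtain K2 where K2: "\<And>x. norm (g x) \<le> K2 * norm x" unfolding dual_def by blast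
  have "norm (f x + g x) \<le> (K1 + K2) * norm x" for x
    using norm_triangle_ineq[of "f x" "g x"] K1[of x] K2[of x] by (simp add: distrib_right)
  then have "\<exists>K. \<forall>x. norm (f x + g x) \<le> K * norm x" by blast
  with f g show ?thesis
    unfolding dual_def by (auto simp: algebra_simps)
qed

lemma dual_comp_bounded_ops:
  assumes sm: "scalar_structure sm" and f: "f \<in> dual sm" and T: "T \<in> bounded_ops sm"
  shows "(\<lambda>x. f (T x)) \<in> dual sm"
proof -
  have "bounded_linear (\<lambda>x. f (T x))"
    using bounded_linear_compose[OF dual_imp_bounded_linear[OF sm f]
        bounded_ops_imp_bounded_linear[OF sm T]] .
  then obtain K where "\<And>x. norm (f (T x)) \<le> norm x * K"
    using bounded_linear.bounded by blast
  with f T show ?thesis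
    unfolding dual_def bounded_ops_def klinear_op_def by (auto simp: mult.commute)
qed

lemma peval_in_dual:
  assumes J: "nice_embedding sm J"
  shows "peval J s \<in> dual sm"
proof -
  have "norm (peval J s x) \<le> 1 * norm x" for x
    using norm_bounded[of "J x" s] J unfolding nice_embedding_def peval_def by simp
  then have "\<exists>K. \<forall>x. norm (peval J s x) \<le> K * norm x" by blast
  with J show ?thesis
    unfolding dual_def nice_embedding_def peval_def by auto
qed

lemma onorm_mult_left:
  fixes f :: "'a::real_normed_vector \<Rightarrow> 'k::real_normed_field"
  assumes "bounded_linear f"
  shows "onorm (\<lambda>x. c * f x) = norm c * onorm f"
proof -
  have "onorm (\<lambda>x. c * f x) = onorm (\<lambda>x. norm c *\<^sub>R f x)"
    unfolding onorm_def by (simp add: norm_mult)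
  with onorm_scaleR[OF assms] show ?thesis by simp
qed

lemma onorm_peval_comp_le:
  assumes J: "\<And>x. norm (J x) \<le> norm x" and A: "bounded_linear A"
  shows "onorm (\<lambda>x. peval J s (A x)) \<le> onorm A"
proof (rule onorm_bound)
  show "0 \<le> onorm A" by (rule onorm_pos_le[OF A])
  fix x
  have "norm (peval J s (A x)) \<le> norm (A x)"
    using norm_bounded[of "J (A x)" s] J[of "A x"] unfolding peval_def by linarith
  also have "\<dots> \<le> onorm A * norm x" by (rule onorm[OF A])
  finally show "norm (peval J s (A x)) \<le> onorm A * norm x" .
qed

lemma exists_onorm_peval_comp_gt:
  assumes sm: "scalar_structure sm" and J: "nice_embedding sm J" and A: "bounded_linear A"
    and r: "r < onorm A"
  shows "\<exists>s. r < onorm (\<lambda>x. peval J s (A x))"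
proof -
  have bl: "bounded_linear (\<lambda>x. peval J s (A x))" for s
    using bounded_linear_compose[OF dual_imp_bounded_linear[OF sm peval_in_dual[OF J]] A] .
  show ?thesis
  proof (cases "r < 0")
    case True
    then have "r < onorm (\<lambda>x. peval J s (A x))" for s
      using onorm_pos_le[OF bl, of s] by linarith
    then show ?thesis by blast
  next
    case False
    have "\<exists>x. r * norm x < norm (A x)"
      using r onorm_bound[of r A] False by (meson not_le)
    then obtain x where x: "r * norm x < norm (A x)" by blast
    have "\<exists>s. r * norm x < norm (peval J s (A x))"
    proof (rule ccontr)
      assume "\<not> ?thesis"
      then have "norm (J (A x)) \<le> r * norm x"
        unfolding peval_def by (intro norm_bound) (auto simp: not_less)
      with x J show False unfolding nice_embedding_def by simp
    qed
    then obtain s where s: "r * norm x < norm (peval J s (A x))" by blast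
    have "x \<noteq> 0" using x A by (auto simp: linear_simps)
    moreover have "r * norm x < onorm (\<lambda>x. peval J s (A x)) * norm x"
      using s onorm[OF bl, of s x] by simp
    ultimately show ?thesis by auto
  qed
qed

lemma onorm_add_L_summand_generator:
  assumes P: "L_projection sm P (lin1 p)" and p: "onorm p = 1"
    and pr: "\<And>f. f \<in> dual sm \<Longrightarrow> P f = (\<lambda>x. pr f * p x)"
    and sm: "scalar_structure sm" and q: "q \<in> dual sm"
  shows "onorm (\<lambda>x. p x + q x) = onorm q + norm (1 + pr q) - norm (pr q)"
proof -
  have lin1_dual: "lin1 p \<subseteq> dual sm" and P_image: "P ` dual sm = lin1 p"
    and P_add: "\<And>f g. f \<in> dual sm \<Longrightarrow> g \<in> dual sm \<Longrightarrow> P (\<lambda>x. f x + g x) = (\<lambda>x. P f x + P g x)"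
    and P_idem: "\<And>f. f \<in> dual sm \<Longrightarrow> P (P f) = P f"
    and L_norm: "\<And>f. f \<in> dual sm \<Longrightarrow> onorm f = onorm (P f) + onorm (\<lambda>x. f x - P f x)"
    using P unfolding L_projection_def by blast+
  have p_lin1: "p \<in> lin1 p" unfolding lin1_def by (auto intro!: exI[of _ 1])
  then have p_dual: "p \<in> dual sm" using lin1_dual by blast
  obtain g where "g \<in> dual sm" "p = P g" using p_lin1 P_image by blast
  then have Pp: "P p = p" using P_idem by simp
  have p_bl: "bounded_linear p" by (rule dual_imp_bounded_linear[OF sm p_dual])
  have Pq: "P q = (\<lambda>x. pr q * p x)" by (rule pr[OF q])
  have P_sum: "P (\<lambda>x. p x + q x) = (\<lambda>x. (1 + pr q) * p x)"
    using P_add[OF p_dual q] Pp Pq by (simp add: distrib_right)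
  have residual: "(\<lambda>x. (p x + q x) - P (\<lambda>x. p x + q x) x) = (\<lambda>x. q x - P q x)"
    unfolding P_sum Pq by (simp add: algebra_simps)
  have "onorm (\<lambda>x. p x + q x)
      = onorm (P (\<lambda>x. p x + q x)) + onorm (\<lambda>x. (p x + q x) - P (\<lambda>x. p x + q x) x)"
    by (rule L_norm[OF dual_add[OF p_dual q]])
  also have "\<dots> = norm (1 + pr q) + onorm (\<lambda>x. q x - P q x)"
    unfolding residual by (simp add: P_sum onorm_mult_left[OF p_bl] p)
  finally have "onorm (\<lambda>x. p x + q x) = norm (1 + pr q) + onorm (\<lambda>x. q x - P q x)" .
  moreover have "onorm q = norm (pr q) + onorm (\<lambda>x. q x - P q x)"
    using L_norm[OF q] unfolding Pq onorm_mult_left[OF p_bl] p by simp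
  ultimately show ?thesis by simp
qed

lemma onorm_peval_comp_Id_plus:
  assumes sm: "scalar_structure sm" and J: "nice_embedding sm J"
    and P: "L_projection sm P (lin1 (peval J s))"
    and pr: "\<And>f. f \<in> dual sm \<Longrightarrow> P f = (\<lambda>x. pr f * peval J s x)"
    and T: "T \<in> bounded_ops sm"
  shows "onorm (\<lambda>x. peval J s (x + T x))
    = onorm (\<lambda>x. peval J s (T x)) + norm (1 + pr (\<lambda>x. peval J s (T x))) - norm (pr (\<lambda>x. peval J s (T x)))"
proof -
  have "peval J s (x + y) = peval J s x + peval J s y" for x y
    using peval_in_dual[OF J] unfolding dual_def by blast
  then have "onorm (\<lambda>x. peval J s (x + T x)) = onorm (\<lambda>x. peval J s x + peval J s (T x))"
    by simp
  also have "\<dots> = onorm (\<lambda>x. peval J s (T x)) + norm (1 + pr (\<lambda>x. peval J s (T x)))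
      - norm (pr (\<lambda>x. peval J s (T x)))"
  proof (rule onorm_add_L_summand_generator[OF P _ pr sm])
    show "onorm (peval J s) = 1" using J unfolding nice_embedding_def by simp
    show "(\<lambda>x. peval J s (T x)) \<in> dual sm"
      by (rule dual_comp_bounded_ops[OF sm peval_in_dual[OF J] T])
  qed
  finally show ?thesis .
qed

lemma ereal_SUP_nonneg_iff:
  "0 \<le> (SUP s\<in>A. ereal (f s)) \<longleftrightarrow> (\<forall>\<delta>>0. \<exists>s\<in>A. - \<delta> < f s)"
proof
  assume "0 \<le> (SUP s\<in>A. ereal (f s))"
  then show "\<forall>\<delta>>0. \<exists>s\<in>A. - \<delta> < f s"
    by (auto simp: less_SUP_iff dest!: order.strict_trans2[of "ereal (- _)" 0, rotated])
next
  assume "\<forall>\<delta>>0. \<exists>s\<in>A. - \<delta> < f s"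
  then have \<delta>_bound: "ereal (- \<delta>) < (SUP s\<in>A. ereal (f s))" if "\<delta> > 0" for \<delta>
    using that by (auto simp: less_SUP_iff)
  show "0 \<le> (SUP s\<in>A. ereal (f s))"
  proof (rule dense_le)
    fix z :: ereal
    assume "z < 0"
    then show "z \<le> (SUP s\<in>A. ereal (f s))"
      using \<delta>_bound[of "- real_of_ereal z"] by (cases z) auto
  qed
qed

lemma sup_eq_one_plus_bound_iff:
  fixes a d :: "'s \<Rightarrow> real"
  assumes upper: "\<And>s. 1 + a s + d s \<le> M"
    and approx: "\<And>e. e > 0 \<Longrightarrow> \<exists>s. M - e < 1 + a s + d s"
    and a_le: "\<And>s. a s \<le> N" and d_le: "\<And>s. d s \<le> 0"
  shows "M = 1 + N \<longleftrightarrow> (\<forall>\<epsilon>>0. \<forall>\<delta>>0. \<exists>s. N - \<epsilon> < a s \<and> - \<delta> < d s)"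
proof
  assume "M = 1 + N"
  show "\<forall>\<epsilon>>0. \<forall>\<delta>>0. \<exists>s. N - \<epsilon> < a s \<and> - \<delta> < d s"
  proof (intro allI impI)
    fix \<epsilon> \<delta> :: real
    assume "\<epsilon> > 0" "\<delta> > 0"
    then obtain s where "M - min \<epsilon> \<delta> < 1 + a s + d s" using approx by fastforce
    then have "N - \<epsilon> < a s \<and> - \<delta> < d s"
      using \<open>M = 1 + N\<close> a_le[of s] d_le[of s] by auto
    then show "\<exists>s. N - \<epsilon> < a s \<and> - \<delta> < d s" by blast
  qed
next
  assume H: "\<forall>\<epsilon>>0. \<forall>\<delta>>0. \<exists>s. N - \<epsilon> < a s \<and> - \<delta> < d s"
  have "M \<le> 1 + N"
  proof (rule field_le_epsilon)
    fix e :: real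
    assume "e > 0"
    then obtain s where "M - e < 1 + a s + d s" using approx by blast
    then show "M \<le> 1 + N + e" using a_le[of s] d_le[of s] by linarith
  qed
  moreover have "1 + N \<le> M"
  proof (rule field_le_epsilon)
    fix e :: real
    assume "e > 0"
    then obtain s where "N - e/2 < a s" "- (e/2) < d s" using H half_gt_zero by blast
    then show "1 + N \<le> M + e" using upper[of s] by simp
  qed
  ultimately show "M = 1 + N" by simp
qed

theorem lemma2p1:
  fixes sm :: "'k::real_normed_field \<Rightarrow> 'a::banach \<Rightarrow> 'a"
    and J :: "'a \<Rightarrow> ('s::t2_space \<Rightarrow>\<^sub>C 'k)"
    and Pi :: "'s \<Rightarrow> ('a \<Rightarrow> 'k) \<Rightarrow> ('a \<Rightarrow> 'k)"
    and pi :: "'s \<Rightarrow> ('a \<Rightarrow> 'k) \<Rightarrow> 'k"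
    and T :: "'a \<Rightarrow> 'a"
  assumes sm: "scalar_structure sm"
    and J: "nice_embedding sm J"
    and Pi: "\<And>s. L_projection sm (Pi s) (lin1 (peval J s))"
    and pi: "\<And>s f. f \<in> dual sm \<Longrightarrow> Pi s f = (\<lambda>x. pi s f * peval J s x)"
    and T: "T \<in> bounded_ops sm"
  shows "onorm (\<lambda>x. x + T x) = 1 + onorm T \<longleftrightarrow>
    (\<forall>\<epsilon>>0. (SUP s\<in>{s. onorm (\<lambda>x. peval J s (T x)) > onorm T - \<epsilon>}.
         ereal (norm (1 + pi s (\<lambda>x. peval J s (T x))) - (1 + norm (pi s (\<lambda>x. peval J s (T x))))))
       \<ge> 0)"
proof -
  define q where "q s = (\<lambda>x. peval J s (T x))" for s
  define d where "d s = norm (1 + pi s (q s)) - (1 + norm (pi s (q s)))" for s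
  have J_nonexpansive: "\<And>x. norm (J x) \<le> norm x" using J unfolding nice_embedding_def by simp
  have T_bl: "bounded_linear T" by (rule bounded_ops_imp_bounded_linear[OF sm T])
  have Id_T_bl: "bounded_linear (\<lambda>x. x + T x)" by (intro bounded_linear_add bounded_linear_ident T_bl)
  have decomposition: "onorm (\<lambda>x. peval J s (x + T x)) = 1 + onorm (q s) + d s" for s
    using onorm_peval_comp_Id_plus[OF sm J Pi pi T] unfolding q_def d_def by simp
  have "onorm (\<lambda>x. x + T x) = 1 + onorm T \<longleftrightarrow>
      (\<forall>\<epsilon>>0. \<forall>\<delta>>0. \<exists>s. onorm T - \<epsilon> < onorm (q s) \<and> - \<delta> < d s)"
  proof (rule sup_eq_one_plus_bound_iff)
    show "1 + onorm (q s) + d s \<le> onorm (\<lambda>x. x + T x)" for s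
      using onorm_peval_comp_le[OF J_nonexpansive Id_T_bl, of s] decomposition[of s] by simp
    show "\<exists>s. onorm (\<lambda>x. x + T x) - e < 1 + onorm (q s) + d s" if "e > 0" for e
      using exists_onorm_peval_comp_gt[OF sm J Id_T_bl, of "onorm (\<lambda>x. x + T x) - e"] that
      unfolding decomposition by simp
    show "onorm (q s) \<le> onorm T" for s
      unfolding q_def by (rule onorm_peval_comp_le[OF J_nonexpansive T_bl])
    show "d s \<le> 0" for s
      unfolding d_def using norm_triangle_ineq[of 1 "pi s (q s)"] by simp
  qed
  also have "\<dots> \<longleftrightarrow> (\<forall>\<epsilon>>0. 0 \<le> (SUP s\<in>{s. onorm T - \<epsilon> < onorm (q s)}. ereal (d s)))"
    by (simp only: ereal_SUP_nonneg_iff Bex_def mem_Collect_eq)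
  finally show ?thesis
    by (simp only: q_def d_def)
qed

end
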